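(* Let $q$ be a prime power and let $\ell\ge 2$. There is a constant $c_\ell>0$ depending only on $\ell$ such that the following holds. Let $n\le m$ and let $C\subseteq\mathbb{F}_{q^m}^n$ be an MRD code of rate $R$ that is $\big(\frac{\ell(1-R)}{\ell+1},\ell\big)$-average-radius list decodable in the rank metric. Then $m\ge c_\ell\,(nR-1)(n-\ell-nR+1)$. In particular, if $R\in[c,\,1-c-\ell/n]$ for some constant $c>0$, then $m=\Omega_{\ell,c}(n^2)$.
   Context: For $\bm{v}=(v_1,\dots,v_n)\in\mathbb{F}_{q^m}^n$, $\mathrm{rank}_{\mathbb{F}_q}(\bm{v})=\dim_{\mathbb{F}_q}\mathrm{span}_{\mathbb{F}_q}\{v_1,\dots,v_n\}$ (equivalently the rank of $\bm{v}$ viewed as an $m\times n$ matrix over $\mathbb{F}_q$) and $d_R(\bm{u},\bm{v})=\mathrm{rank}_{\mathbb{F}_q}(\bm{u}-\bm{v})$. A code is a subset $C\subseteq\mathbb{F}_{q^m}^n$; its rate is $R=\log_q|C|/(nm)$ and its minimum distance $d$ is the minimum of $d_R$ over distinct codewords. $C$ is MRD if it attains the Singleton bound, i.e. $|C|=q^{m(n-d+1)}$. $C$ is $(\rho,\ell)$-average-radius list decodable if for every $\bm{y}\in\mathbb{F}_{q^m}^n$ and every $\ell+1$ distinct codewords $\bm{c}_0,\dots,\bm{c}_\ell$, $\frac{1}{\ell+1}\sum_{i=0}^\ell d_R(\bm{y},\bm{c}_i)>\rho n$. *)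

theory Defs
  imports "HOL-Algebra.Ring" "HOL-Algebra.FiniteProduct" Complex_Main
begin

text \<open>Vectors of F_{q^m}^n are represented by their coordinate matrices: m x n matrices over
  the base field F = F_q (an HOL-Algebra field), stored as functions nat => nat => 'a that are
  zero outside the index range 0..m-1 x 0..n-1.\<close>

definition fmats :: "('a, 'b) ring_scheme \<Rightarrow> nat \<Rightarrow> nat \<Rightarrow> (nat \<Rightarrow> nat \<Rightarrow> 'a) set" where
  "fmats F m n = {A. (\<forall>i<m. \<forall>j<n. A i j \<in> carrier F) \<and>
                     (\<forall>i j. (m \<le> i \<or> n \<le> j) \<longrightarrow> A i j = \<zero>\<^bsub>F\<^esub>)}"

definition cols_indep :: "('a, 'b) ring_scheme \<Rightarrow> nat \<Rightarrow> (nat \<Rightarrow> nat \<Rightarrow> 'a) \<Rightarrow> nat set \<Rightarrow> bool" where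
  "cols_indep F m A S \<longleftrightarrow>
     (\<forall>c \<in> S \<rightarrow> carrier F.
        (\<forall>i<m. finsum F (\<lambda>j. c j \<otimes>\<^bsub>F\<^esub> A i j) S = \<zero>\<^bsub>F\<^esub>) \<longrightarrow> (\<forall>j\<in>S. c j = \<zero>\<^bsub>F\<^esub>))"

definition mrank :: "('a, 'b) ring_scheme \<Rightarrow> nat \<Rightarrow> nat \<Rightarrow> (nat \<Rightarrow> nat \<Rightarrow> 'a) \<Rightarrow> nat" where
  "mrank F m n A = Max {card S | S. S \<subseteq> {..<n} \<and> cols_indep F m A S}"

definition rdist :: "('a, 'b) ring_scheme \<Rightarrow> nat \<Rightarrow> nat \<Rightarrow>
    (nat \<Rightarrow> nat \<Rightarrow> 'a) \<Rightarrow> (nat \<Rightarrow> nat \<Rightarrow> 'a) \<Rightarrow> nat" where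
  "rdist F m n A B = mrank F m n (\<lambda>i j. A i j \<ominus>\<^bsub>F\<^esub> B i j)"

definition min_dist :: "('a, 'b) ring_scheme \<Rightarrow> nat \<Rightarrow> nat \<Rightarrow> (nat \<Rightarrow> nat \<Rightarrow> 'a) set \<Rightarrow> nat" where
  "min_dist F m n C = Min {rdist F m n A B | A B. A \<in> C \<and> B \<in> C \<and> A \<noteq> B}"

definition code_rate :: "('a, 'b) ring_scheme \<Rightarrow> nat \<Rightarrow> nat \<Rightarrow> (nat \<Rightarrow> nat \<Rightarrow> 'a) set \<Rightarrow> real" where
  "code_rate F m n C = log (real (card (carrier F))) (real (card C)) / (real n * real m)"

text \<open>MRD code (a code with at least two codewords, so that d is defined) attaining the
  Singleton bound |C| = q^(m(n-d+1)).\<close>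
definition is_MRD :: "('a, 'b) ring_scheme \<Rightarrow> nat \<Rightarrow> nat \<Rightarrow> (nat \<Rightarrow> nat \<Rightarrow> 'a) set \<Rightarrow> bool" where
  "is_MRD F m n C \<longleftrightarrow> C \<subseteq> fmats F m n \<and> 2 \<le> card C \<and>
     card C = card (carrier F) ^ (m * (n - min_dist F m n C + 1))"

definition avg_list_dec :: "('a, 'b) ring_scheme \<Rightarrow> nat \<Rightarrow> nat \<Rightarrow> (nat \<Rightarrow> nat \<Rightarrow> 'a) set
    \<Rightarrow> real \<Rightarrow> nat \<Rightarrow> bool" where
  "avg_list_dec F m n C \<rho> l \<longleftrightarrow>
     (\<forall>y \<in> fmats F m n. \<forall>cs. inj_on cs {..l} \<and> cs ` {..l} \<subseteq> C \<longrightarrow>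
        (\<Sum>i\<le>l. real (rdist F m n y (cs i))) / real (l + 1) > \<rho> * real n)"

end

theory Submission
  imports Defs "HOL-Library.FuncSet"
begin

text \<open>Let \<open>d\<close> be the minimum distance of the MRD code \<open>C\<close> and \<open>k = n - d\<close>, so that
  \<open>n R - 1 = k\<close>. Fix a codeword \<open>c0\<close>. For every \<open>k \<times> (d - 2)\<close> matrix \<open>M\<close>, the MRD property gives
  a codeword \<open>c_M\<close> that agrees with \<open>c0\<close> on the rows of \<open>[0 0 | I | M]\<close> and whose first column
  is that of \<open>c0\<close> plus a fixed nonzero vector. Distinct \<open>M\<close> give distinct codewords, for
  otherwise \<open>c_M - c0\<close> would vanish on \<open>k + 1\<close> independent vectors. If
  \<open>k (d - 2) \<ge> m + l\<close>, the pigeonhole principle yields \<open>l\<close> of these codewords whose second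
  columns also differ from that of \<open>c0\<close> by one and the same vector. Changing the first two
  columns of \<open>c0\<close> accordingly gives a word at distance at most \<open>2\<close> from \<open>c0\<close> and at most
  \<open>d - 2\<close> from each of the \<open>l\<close> codewords, an average of at most \<open>l (d - 1) / (l + 1)\<close>, which
  is exactly the radius \<open>\<rho> n\<close>. Hence \<open>k (d - 2) < m + l\<close>, which gives the theorem with
  \<open>c_l = 1 / (l + 1)\<close>.

  Ranks are bounded by counting rather than by dimension theory: over \<open>F_q\<close>, a matrix that
  vanishes on \<open>r\<close> independent vectors has at most \<open>n - r\<close> independent columns.\<close>

section \<open>Vectors, matrices and pivot families\<close>

definition fvecs :: "('a, 'b) ring_scheme \<Rightarrow> nat \<Rightarrow> (nat \<Rightarrow> 'a) set" where
  "fvecs F n = {x. (\<forall>j<n. x j \<in> carrier F) \<and> (\<forall>j. n \<le> j \<longrightarrow> x j = \<zero>\<^bsub>F\<^esub>)}"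

definition mat_vec :: "('a, 'b) ring_scheme \<Rightarrow> nat \<Rightarrow> (nat \<Rightarrow> nat \<Rightarrow> 'a) \<Rightarrow> (nat \<Rightarrow> 'a) \<Rightarrow> nat \<Rightarrow> 'a" where
  "mat_vec F n A x = (\<lambda>i. finsum F (\<lambda>j. A i j \<otimes>\<^bsub>F\<^esub> x j) {..<n})"

definition lin_comb :: "('a, 'b) ring_scheme \<Rightarrow> nat \<Rightarrow> (nat \<Rightarrow> 'a) \<Rightarrow> (nat \<Rightarrow> nat \<Rightarrow> 'a) \<Rightarrow> nat \<Rightarrow> 'a" where
  "lin_comb F r c V = (\<lambda>s. finsum F (\<lambda>j. c j \<otimes>\<^bsub>F\<^esub> V j s) {..<r})"

definition unit_vec :: "('a, 'b) ring_scheme \<Rightarrow> nat \<Rightarrow> nat \<Rightarrow> 'a" where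
  "unit_vec F p = (\<lambda>s. if s = p then \<one>\<^bsub>F\<^esub> else \<zero>\<^bsub>F\<^esub>)"

text \<open>A family \<open>V 0, \<dots>, V (r - 1)\<close> in reduced echelon form with pivot columns \<open>p\<close>; it
  stands in for a linearly independent family, and avoids any dimension theory.\<close>
definition pivot_family :: "('a, 'b) ring_scheme \<Rightarrow> nat \<Rightarrow> nat \<Rightarrow> (nat \<Rightarrow> nat \<Rightarrow> 'a) \<Rightarrow> (nat \<Rightarrow> nat) \<Rightarrow> bool" where
  "pivot_family F n r V p \<longleftrightarrow> (\<forall>j<r. V j \<in> fvecs F n \<and> p j < n \<and>
      (\<forall>j'<r. V j' (p j) = (if j' = j then \<one>\<^bsub>F\<^esub> else \<zero>\<^bsub>F\<^esub>)))"

lemma pivot_family_prefix: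
  "pivot_family F n r V p \<Longrightarrow> r' \<le> r \<Longrightarrow> pivot_family F n r' V p"
  unfolding pivot_family_def by auto

lemma pivot_family_fvecs: "pivot_family F n r V p \<Longrightarrow> j < r \<Longrightarrow> V j \<in> fvecs F n"
  unfolding pivot_family_def by blast

lemma cols_indepD:
  "cols_indep F m A S \<Longrightarrow> c \<in> S \<rightarrow> carrier F \<Longrightarrow>
    (\<forall>i<m. finsum F (\<lambda>j. c j \<otimes>\<^bsub>F\<^esub> A i j) S = \<zero>\<^bsub>F\<^esub>) \<Longrightarrow> j \<in> S \<Longrightarrow> c j = \<zero>\<^bsub>F\<^esub>"
  unfolding cols_indep_def by blast

lemma mrank_le:
  assumes "\<And>S. S \<subseteq> {..<n} \<Longrightarrow> cols_indep F m A S \<Longrightarrow> card S \<le> b"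
  shows "mrank F m n A \<le> b"
proof -
  have "{card S | S. S \<subseteq> {..<n} \<and> cols_indep F m A S} \<subseteq> card ` Pow {..<n}" by auto
  then have fin: "finite {card S | S. S \<subseteq> {..<n} \<and> cols_indep F m A S}"
    by (rule finite_subset) auto
  have "cols_indep F m A {}" unfolding cols_indep_def by auto
  then have ne: "{card S | S. S \<subseteq> {..<n} \<and> cols_indep F m A S} \<noteq> {}" by auto
  show ?thesis unfolding mrank_def using assms by (subst Max_le_iff[OF fin ne]) auto
qed

lemma rdist_le_n: "rdist F m n A B \<le> n"
  unfolding rdist_def by (rule mrank_le) (auto intro: card_mono[of "{..<n}", simplified])

context field
begin

lemma fmats_carrier: "A \<in> fmats R m n \<Longrightarrow> A i j \<in> carrier R"
  unfolding fmats_def by (cases "i < m \<and> j < n") auto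

lemma fvecs_carrier: "x \<in> fvecs R n \<Longrightarrow> x j \<in> carrier R"
  unfolding fvecs_def by (cases "j < n") auto

lemma fvecs_lin: "x \<in> fvecs R n \<Longrightarrow> y \<in> fvecs R n \<Longrightarrow> a \<in> carrier R \<Longrightarrow> b \<in> carrier R \<Longrightarrow>
    (\<lambda>s. a \<otimes> x s \<oplus> b \<otimes> y s) \<in> fvecs R n"
  unfolding fvecs_def by auto

lemma unit_vec_fvecs: "p < n \<Longrightarrow> unit_vec R p \<in> fvecs R n"
  unfolding fvecs_def unit_vec_def by auto

lemma diff_fmats: "A \<in> fmats R m n \<Longrightarrow> B \<in> fmats R m n \<Longrightarrow> (\<lambda>i j. A i j \<ominus> B i j) \<in> fmats R m n"
  unfolding fmats_def by (auto simp: minus_eq)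

lemma minus_eq_zero_iff: "a \<in> carrier R \<Longrightarrow> b \<in> carrier R \<Longrightarrow> a \<ominus> b = \<zero> \<longleftrightarrow> a = b"
  by (metis a_minus_def add.inv_closed minus_equality r_neg)

lemma card_carrier_ge2: "finite (carrier R) \<Longrightarrow> 2 \<le> card (carrier R)"
  using card_mono[of "carrier R" "{\<zero>, \<one>}"] by simp

lemma mat_vec_closed: "A \<in> fmats R m n \<Longrightarrow> x \<in> fvecs R n \<Longrightarrow> mat_vec R n A x i \<in> carrier R"
  unfolding mat_vec_def by (auto intro!: finsum_closed simp: fmats_carrier fvecs_carrier)

lemma mat_vec_lin:
  assumes A: "A \<in> fmats R m n" and x: "x \<in> fvecs R n" and y: "y \<in> fvecs R n"
    and a: "a \<in> carrier R" and b: "b \<in> carrier R"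
  shows "mat_vec R n A (\<lambda>s. a \<otimes> x s \<oplus> b \<otimes> y s) i = a \<otimes> mat_vec R n A x i \<oplus> b \<otimes> mat_vec R n A y i"
proof -
  have c: "\<And>j. A i j \<in> carrier R" "\<And>j. x j \<in> carrier R" "\<And>j. y j \<in> carrier R"
    using A x y by (auto simp: fmats_carrier fvecs_carrier)
  have "mat_vec R n A (\<lambda>s. a \<otimes> x s \<oplus> b \<otimes> y s) i =
      (\<Oplus>j\<in>{..<n}. a \<otimes> (A i j \<otimes> x j) \<oplus> b \<otimes> (A i j \<otimes> y j))"
    unfolding mat_vec_def by (rule finsum_cong') (use c a b in \<open>auto, algebra\<close>)
  also have "\<dots> = (\<Oplus>j\<in>{..<n}. a \<otimes> (A i j \<otimes> x j)) \<oplus> (\<Oplus>j\<in>{..<n}. b \<otimes> (A i j \<otimes> y j))"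
    by (rule finsum_addf) (use c a b in auto)
  also have "\<dots> = a \<otimes> mat_vec R n A x i \<oplus> b \<otimes> mat_vec R n A y i"
    unfolding mat_vec_def using c a b by (simp add: finsum_rdistr Pi_def)
  finally show ?thesis .
qed

lemma mat_vec_diff:
  assumes A: "A \<in> fmats R m n" and B: "B \<in> fmats R m n" and x: "x \<in> fvecs R n"
  shows "mat_vec R n (\<lambda>i j. A i j \<ominus> B i j) x i = mat_vec R n A x i \<ominus> mat_vec R n B x i"
proof -
  have c: "\<And>j. A i j \<in> carrier R" "\<And>j. x j \<in> carrier R" "\<And>j. B i j \<in> carrier R"
    using A B x by (auto simp: fmats_carrier fvecs_carrier)
  have "mat_vec R n (\<lambda>i j. A i j \<ominus> B i j) x i =
      (\<Oplus>j\<in>{..<n}. A i j \<otimes> x j \<oplus> \<ominus> \<one> \<otimes> (B i j \<otimes> x j))"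
    unfolding mat_vec_def by (rule finsum_cong') (use c in \<open>auto, algebra\<close>)
  also have "\<dots> = (\<Oplus>j\<in>{..<n}. A i j \<otimes> x j) \<oplus> (\<Oplus>j\<in>{..<n}. \<ominus> \<one> \<otimes> (B i j \<otimes> x j))"
    by (rule finsum_addf) (use c in auto)
  also have "\<dots> = mat_vec R n A x i \<oplus> \<ominus> \<one> \<otimes> mat_vec R n B x i"
    unfolding mat_vec_def using c by (simp add: finsum_rdistr Pi_def)
  also have "\<dots> = mat_vec R n A x i \<ominus> mat_vec R n B x i"
    using mat_vec_closed[OF A x] mat_vec_closed[OF B x] by algebra
  finally show ?thesis .
qed

lemma mat_vec_unit_vec: "A \<in> fmats R m n \<Longrightarrow> s < n \<Longrightarrow> mat_vec R n A (unit_vec R s) i = A i s"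
proof -
  assume A: "A \<in> fmats R m n" and s: "s < n"
  have "mat_vec R n A (unit_vec R s) i = (\<Oplus>j\<in>{..<n}. if s = j then A i j else \<zero>)"
    unfolding mat_vec_def unit_vec_def by (rule finsum_cong') (use A in \<open>auto simp: fmats_carrier\<close>)
  also have "\<dots> = A i s" by (rule finsum_singleton) (use A s in \<open>auto simp: fmats_carrier\<close>)
  finally show ?thesis .
qed

lemma mat_vec_agree_diff_eq_zero:
  assumes "A \<in> fmats R m n" "B \<in> fmats R m n" "x \<in> fvecs R n"
    and "mat_vec R n A x i = mat_vec R n B x i"
  shows "mat_vec R n (\<lambda>i j. A i j \<ominus> B i j) x i = \<zero>"
  using assms by (simp add: mat_vec_diff mat_vec_closed minus_eq_zero_iff)

lemma mat_vec_agree_lin: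
  assumes A: "A \<in> fmats R m n" and B: "B \<in> fmats R m n" and x: "x \<in> fvecs R n" and y: "y \<in> fvecs R n"
    and a: "a \<in> carrier R" and b: "b \<in> carrier R"
    and "mat_vec R n A x i = mat_vec R n B x i" and "mat_vec R n A y i = mat_vec R n B y i"
  shows "mat_vec R n A (\<lambda>s. a \<otimes> x s \<oplus> b \<otimes> y s) i = mat_vec R n B (\<lambda>s. a \<otimes> x s \<oplus> b \<otimes> y s) i"
  using assms by (simp add: mat_vec_lin)

lemma lin_comb_fvecs:
  assumes V: "\<And>j. j < r \<Longrightarrow> V j \<in> fvecs R n" and c: "c \<in> {..<r} \<rightarrow> carrier R"
  shows "lin_comb R r c V \<in> fvecs R n"
proof -
  have "(\<Oplus>j\<in>{..<r}. c j \<otimes> V j s) = \<zero>" if "n \<le> s" for s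
  proof -
    have "(\<Oplus>j\<in>{..<r}. c j \<otimes> V j s) = (\<Oplus>j\<in>{..<r}. \<zero>)"
      using V c that by (intro finsum_cong') (auto simp: Pi_def fvecs_def)
    then show ?thesis by simp
  qed
  moreover have "(\<Oplus>j\<in>{..<r}. c j \<otimes> V j s) \<in> carrier R" for s
  proof -
    have "\<And>j. j < r \<Longrightarrow> V j s \<in> carrier R" using V fvecs_carrier by blast
    then show ?thesis using c by (auto intro!: finsum_closed)
  qed
  ultimately show ?thesis unfolding fvecs_def lin_comb_def by blast
qed

lemma mat_vec_lin_comb_eq_zero:
  assumes A: "A \<in> fmats R m n" and V: "\<And>j. j < r \<Longrightarrow> V j \<in> fvecs R n"
    and K: "\<And>j. j < r \<Longrightarrow> mat_vec R n A (V j) i = \<zero>" and c: "c \<in> {..<r} \<rightarrow> carrier R"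
  shows "mat_vec R n A (lin_comb R r c V) i = \<zero>"
  using V K c
proof (induction r)
  case 0
  have "(\<Oplus>j\<in>{..<n}. A i j \<otimes> \<zero>) = (\<Oplus>j\<in>{..<n}. \<zero>)"
    by (rule finsum_cong') (auto simp: fmats_carrier[OF A])
  then show ?case unfolding lin_comb_def mat_vec_def by simp
next
  case (Suc r)
  have c: "c \<in> {..<r} \<rightarrow> carrier R" "c r \<in> carrier R" using Suc.prems by auto
  have V: "\<And>j. j < r \<Longrightarrow> V j \<in> fvecs R n" "V r \<in> fvecs R n" using Suc.prems by auto
  have comb: "lin_comb R r c V \<in> fvecs R n" using lin_comb_fvecs V c by blast
  have Vc: "\<And>j s. j \<le> r \<Longrightarrow> V j s \<in> carrier R" using V fvecs_carrier le_neq_implies_less by blast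
  have "lin_comb R (Suc r) c V = (\<lambda>s. \<one> \<otimes> lin_comb R r c V s \<oplus> c r \<otimes> V r s)"
  proof
    fix s
    have "lin_comb R (Suc r) c V s = lin_comb R r c V s \<oplus> c r \<otimes> V r s"
      unfolding lin_comb_def lessThan_Suc using c Vc
      by (subst finsum_insert) (auto simp: Pi_def intro!: a_comm finsum_closed)
    then show "lin_comb R (Suc r) c V s = \<one> \<otimes> lin_comb R r c V s \<oplus> c r \<otimes> V r s"
      using comb fvecs_carrier by simp
  qed
  then have "mat_vec R n A (lin_comb R (Suc r) c V) i =
      \<one> \<otimes> mat_vec R n A (lin_comb R r c V) i \<oplus> c r \<otimes> mat_vec R n A (V r) i"
    using mat_vec_lin[OF A comb V(2) one_closed c(2)] by simp
  also have "\<dots> = \<zero>" using Suc c V by simp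
  finally show ?case .
qed

lemma lin_comb_pivot:
  assumes P: "pivot_family R n r V p" and j: "j < r" and c: "c \<in> {..<r} \<rightarrow> carrier R"
  shows "lin_comb R r c V (p j) = c j"
proof -
  have "lin_comb R r c V (p j) = (\<Oplus>j'\<in>{..<r}. if j = j' then c j' else \<zero>)"
    unfolding lin_comb_def
    by (rule finsum_cong') (use P j c in \<open>auto simp: pivot_family_def Pi_def\<close>)
  also have "\<dots> = c j" by (rule finsum_singleton) (use j c in auto)
  finally show ?thesis .
qed

lemma inj_on_lin_comb:
  assumes P: "pivot_family R n r V p"
  shows "inj_on (\<lambda>c. lin_comb R r c V) ({..<r} \<rightarrow>\<^sub>E carrier R)"
proof (rule inj_onI)
  fix a b assume a: "a \<in> {..<r} \<rightarrow>\<^sub>E carrier R" and b: "b \<in> {..<r} \<rightarrow>\<^sub>E carrier R"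
    and eq: "lin_comb R r a V = lin_comb R r b V"
  show "a = b"
  proof (rule PiE_ext[OF a b])
    fix j assume "j \<in> {..<r}"
    then show "a j = b j"
      using eq lin_comb_pivot[OF P, of j a] lin_comb_pivot[OF P, of j b] a b by (auto simp: PiE_def)
  qed
qed

text \<open>One step of Gaussian elimination, with new pivot column \<open>q\<close>.\<close>
lemma pivot_family_extend:
  assumes P: "pivot_family R n k V p" and w: "w \<in> fvecs R n" and q: "q < n"
    and w_p: "\<And>j. j < k \<Longrightarrow> w (p j) = \<zero>" and w_q: "w q = \<one>"
  shows "pivot_family R n (Suc k) (\<lambda>j. if j < k then (\<lambda>s. \<one> \<otimes> V j s \<oplus> \<ominus> V j q \<otimes> w s) else w)
           (\<lambda>j. if j < k then p j else q)"
  unfolding pivot_family_def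
proof (intro allI impI conjI)
  have V: "\<And>j. j < k \<Longrightarrow> V j \<in> fvecs R n" using pivot_family_fvecs[OF P] .
  then have Vc: "\<And>j s. j < k \<Longrightarrow> V j s \<in> carrier R" using fvecs_carrier by blast
  fix j j' assume j: "j < Suc k" and j': "j' < Suc k"
  show "(if j < k then \<lambda>s. \<one> \<otimes> V j s \<oplus> \<ominus> V j q \<otimes> w s else w) \<in> fvecs R n"
    using fvecs_lin[OF V w one_closed] Vc w by auto
  show "(if j < k then p j else q) < n" using P q j unfolding pivot_family_def by auto
  show "(if j' < k then \<lambda>s. \<one> \<otimes> V j' s \<oplus> \<ominus> V j' q \<otimes> w s else w) (if j < k then p j else q) =
      (if j' = j then \<one> else \<zero>)"
  proof (cases "j < k")
    case True
    then show ?thesis using P w_p Vc j' unfolding pivot_family_def by auto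
  next
    case False
    then show ?thesis using j j' w_q Vc by (auto simp: r_neg)
  qed
qed

section \<open>Rank bounds by counting\<close>

lemma finite_fvecs: "finite (carrier R) \<Longrightarrow> finite (fvecs R n)"
  and card_fvecs_le: "finite (carrier R) \<Longrightarrow> card (fvecs R n) \<le> card (carrier R) ^ n"
proof -
  assume f: "finite (carrier R)"
  let ?h = "\<lambda>x. restrict x {..<n}"
  have inj: "inj_on ?h (fvecs R n)"
  proof (rule inj_onI, rule ext)
    fix x y j assume x: "x \<in> fvecs R n" and y: "y \<in> fvecs R n" and e: "?h x = ?h y"
    show "x j = y j"
    proof (cases "j < n")
      case True then show ?thesis using fun_cong[OF e, of j] by simp
    next
      case False then show ?thesis using x y by (simp add: fvecs_def)
    qed
  qed
  have sub: "?h ` fvecs R n \<subseteq> {..<n} \<rightarrow>\<^sub>E carrier R"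
    unfolding fvecs_def by (intro image_subsetI) (simp add: restrict_PiE_iff)
  have fin: "finite ({..<n} \<rightarrow>\<^sub>E carrier R)" using f by (simp add: finite_PiE)
  show "finite (fvecs R n)" using inj_on_finite[OF inj sub fin] .
  have "card (fvecs R n) \<le> card ({..<n} \<rightarrow>\<^sub>E carrier R)" using card_inj_on_le[OF inj sub fin] .
  then show "card (fvecs R n) \<le> card (carrier R) ^ n" by (simp add: card_PiE)
qed

lemma card_supported_fvecs_ge:
  assumes f: "finite (carrier R)" and S: "S \<subseteq> {..<n}"
  shows "card (carrier R) ^ card S \<le> card {x \<in> fvecs R n. \<forall>j. j \<notin> S \<longrightarrow> x j = \<zero>}"
proof -
  let ?h = "\<lambda>g j. if j \<in> S then g j else \<zero>"
  have inj: "inj_on ?h (S \<rightarrow>\<^sub>E carrier R)"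
  proof (rule inj_onI)
    fix a b assume a: "a \<in> S \<rightarrow>\<^sub>E carrier R" and b: "b \<in> S \<rightarrow>\<^sub>E carrier R" and e: "?h a = ?h b"
    show "a = b"
    proof (rule PiE_ext[OF a b])
      fix j assume "j \<in> S"
      then show "a j = b j" using fun_cong[OF e, of j] by simp
    qed
  qed
  have sub: "?h ` (S \<rightarrow>\<^sub>E carrier R) \<subseteq> {x \<in> fvecs R n. \<forall>j. j \<notin> S \<longrightarrow> x j = \<zero>}"
    using S by (auto simp: fvecs_def PiE_def Pi_def)
  have fin: "finite {x \<in> fvecs R n. \<forall>j. j \<notin> S \<longrightarrow> x j = \<zero>}" using finite_fvecs[OF f] by simp
  have "card (carrier R) ^ card S = card (S \<rightarrow>\<^sub>E carrier R)"
    using finite_subset[OF S] by (simp add: card_PiE)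
  also have "\<dots> \<le> card {x \<in> fvecs R n. \<forall>j. j \<notin> S \<longrightarrow> x j = \<zero>}"
    using card_inj_on_le[OF inj sub fin] .
  finally show ?thesis .
qed

lemma finite_fmats: "finite (carrier R) \<Longrightarrow> finite (fmats R m n)"
  and card_fmats_le: "finite (carrier R) \<Longrightarrow> card (fmats R m n) \<le> card (carrier R) ^ (m * n)"
proof -
  assume f: "finite (carrier R)"
  let ?h = "\<lambda>A. \<lambda>p\<in>{..<m} \<times> {..<n}. A (fst p) (snd p)"
  have inj: "inj_on ?h (fmats R m n)"
  proof (rule inj_onI, intro ext)
    fix A B i j assume A: "A \<in> fmats R m n" and B: "B \<in> fmats R m n" and e: "?h A = ?h B"
    show "A i j = B i j"
    proof (cases "i < m \<and> j < n")
      case True then show ?thesis using fun_cong[OF e, of "(i, j)"] by simp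
    next
      case False then show ?thesis using A B by (auto simp: fmats_def)
    qed
  qed
  have sub: "?h ` fmats R m n \<subseteq> {..<m} \<times> {..<n} \<rightarrow>\<^sub>E carrier R"
    unfolding fmats_def by (intro image_subsetI) (auto simp: restrict_PiE_iff)
  have fin: "finite ({..<m} \<times> {..<n} \<rightarrow>\<^sub>E carrier R)" using f by (simp add: finite_PiE)
  show "finite (fmats R m n)" using inj_on_finite[OF inj sub fin] .
  have "card (fmats R m n) \<le> card ({..<m} \<times> {..<n} \<rightarrow>\<^sub>E carrier R)" using card_inj_on_le[OF inj sub fin] .
  then show "card (fmats R m n) \<le> card (carrier R) ^ (m * n)" by (simp add: card_PiE card_cartesian_product)
qed

lemma supported_kernel_vanishes:
  assumes A: "A \<in> fmats R m n" and ind: "cols_indep R m A S" and S: "S \<subseteq> {..<n}"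
    and x: "x \<in> fvecs R n" "\<forall>j. j \<notin> S \<longrightarrow> x j = \<zero>"
    and ker: "\<And>i. i < m \<Longrightarrow> mat_vec R n A x i = \<zero>"
  shows "x j = \<zero>"
proof (cases "j \<in> S")
  case True
  have "finsum R (\<lambda>j. x j \<otimes> A i j) S = \<zero>" if i: "i < m" for i
  proof -
    have "finsum R (\<lambda>j. x j \<otimes> A i j) S = mat_vec R n A x i"
      unfolding mat_vec_def
    proof (rule add.finprod_mono_neutral_cong_left)
      show "\<And>j. j \<in> {..<n} - S \<Longrightarrow> A i j \<otimes> x j = \<zero>"
        using x A by (simp add: fmats_carrier)
      show "\<And>j. j \<in> S \<Longrightarrow> x j \<otimes> A i j = A i j \<otimes> x j"
        using x A by (simp add: fmats_carrier fvecs_carrier m_comm)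
    qed (use S A x in \<open>auto simp: fmats_carrier fvecs_carrier\<close>)
    then show ?thesis using ker i by simp
  qed
  then show ?thesis using cols_indepD[OF ind _ _ True] x(1) fvecs_carrier by auto
next
  case False
  then show ?thesis using x by simp
qed

lemma supported_eq_if_same_image:
  assumes A: "A \<in> fmats R m n" and ind: "cols_indep R m A S" and S: "S \<subseteq> {..<n}"
    and x: "x \<in> fvecs R n" "\<forall>j. j \<notin> S \<longrightarrow> x j = \<zero>" and x': "x' \<in> fvecs R n" "\<forall>j. j \<notin> S \<longrightarrow> x' j = \<zero>"
    and same: "\<And>i. i < m \<Longrightarrow> mat_vec R n A x i = mat_vec R n A x' i"
  shows "x = x'"
proof
  fix s
  define z where "z = (\<lambda>s. \<one> \<otimes> x s \<oplus> \<ominus> \<one> \<otimes> x' s)"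
  have "z s = \<zero>"
  proof (rule supported_kernel_vanishes[OF A ind S])
    show "z \<in> fvecs R n" unfolding z_def by (rule fvecs_lin) (use x x' in auto)
    show "\<forall>j. j \<notin> S \<longrightarrow> z j = \<zero>" using x x' by (simp add: z_def)
    show "mat_vec R n A z i = \<zero>" if "i < m" for i
      using mat_vec_lin[OF A x(1) x'(1)] same[OF that] mat_vec_closed[OF A x'(1)]
      by (simp add: z_def l_minus r_neg)
  qed
  moreover have "x s \<ominus> x' s = z s" unfolding z_def using x(1) x'(1) fvecs_carrier by algebra
  ultimately show "x s = x' s" using x(1) x'(1) by (simp add: fvecs_carrier minus_eq_zero_iff)
qed

lemma mat_vec_add_kernel:
  assumes A: "A \<in> fmats R m n" and x: "x \<in> fvecs R n" and \<kappa>: "\<kappa> \<in> fvecs R n"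
    and ker: "mat_vec R n A \<kappa> i = \<zero>"
  shows "mat_vec R n A (\<lambda>s. x s \<oplus> \<kappa> s) i = mat_vec R n A x i"
proof -
  have "(\<lambda>s. x s \<oplus> \<kappa> s) = (\<lambda>s. \<one> \<otimes> x s \<oplus> \<one> \<otimes> \<kappa> s)"
    using fvecs_carrier[OF x] fvecs_carrier[OF \<kappa>] by simp
  then show ?thesis using mat_vec_lin[OF A x \<kappa> one_closed one_closed] ker mat_vec_closed[OF A x] by simp
qed

lemma inj_on_add_kernel:
  assumes A: "A \<in> fmats R m n" and ind: "cols_indep R m A S" and S: "S \<subseteq> {..<n}"
    and K: "K \<subseteq> fvecs R n" and ker: "\<And>\<kappa> i. \<kappa> \<in> K \<Longrightarrow> i < m \<Longrightarrow> mat_vec R n A \<kappa> i = \<zero>"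
  shows "inj_on (\<lambda>(x, \<kappa>). \<lambda>s. x s \<oplus> \<kappa> s) ({x \<in> fvecs R n. \<forall>j. j \<notin> S \<longrightarrow> x j = \<zero>} \<times> K)"
proof (rule inj_onI, clarify)
  fix x \<kappa> x' \<kappa>'
  assume x: "x \<in> fvecs R n" "\<forall>j. j \<notin> S \<longrightarrow> x j = \<zero>" and x': "x' \<in> fvecs R n" "\<forall>j. j \<notin> S \<longrightarrow> x' j = \<zero>"
    and \<kappa>: "\<kappa> \<in> K" "\<kappa>' \<in> K" and e: "(\<lambda>s. x s \<oplus> \<kappa> s) = (\<lambda>s. x' s \<oplus> \<kappa>' s)"
  have \<kappa>v: "\<kappa> \<in> fvecs R n" "\<kappa>' \<in> fvecs R n" using K \<kappa> by auto
  have "x = x'"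
  proof (rule supported_eq_if_same_image[OF A ind S x x'])
    fix i assume i: "i < m"
    have "mat_vec R n A x i = mat_vec R n A (\<lambda>s. x s \<oplus> \<kappa> s) i"
      using mat_vec_add_kernel[OF A x(1) \<kappa>v(1) ker[OF \<kappa>(1) i]] by simp
    also have "\<dots> = mat_vec R n A x' i"
      unfolding e using mat_vec_add_kernel[OF A x'(1) \<kappa>v(2) ker[OF \<kappa>(2) i]] .
    finally show "mat_vec R n A x i = mat_vec R n A x' i" .
  qed
  moreover have "\<kappa> = \<kappa>'"
  proof
    fix s
    show "\<kappa> s = \<kappa>' s"
      using fun_cong[OF e, of s] \<open>x = x'\<close> fvecs_carrier[OF x'(1)]
        fvecs_carrier[OF \<kappa>v(1)] fvecs_carrier[OF \<kappa>v(2)] by simp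
  qed
  ultimately show "x = x' \<and> \<kappa> = \<kappa>'" ..
qed

lemma card_indep_cols_plus_kernel_le:
  assumes f: "finite (carrier R)" and A: "A \<in> fmats R m n" and P: "pivot_family R n r V p"
    and ker: "\<And>j i. j < r \<Longrightarrow> i < m \<Longrightarrow> mat_vec R n A (V j) i = \<zero>"
    and S: "S \<subseteq> {..<n}" and ind: "cols_indep R m A S"
  shows "card S + r \<le> n"
proof -
  let ?q = "card (carrier R)"
  define K where "K = (\<lambda>c. lin_comb R r c V) ` ({..<r} \<rightarrow>\<^sub>E carrier R)"
  define SV where "SV = {x \<in> fvecs R n. \<forall>j. j \<notin> S \<longrightarrow> x j = \<zero>}"
  let ?h = "\<lambda>(x, \<kappa>). \<lambda>s. x s \<oplus> \<kappa> s"
  have V: "\<And>j. j < r \<Longrightarrow> V j \<in> fvecs R n" using P pivot_family_fvecs by blast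
  have K_fvecs: "K \<subseteq> fvecs R n"
    unfolding K_def using lin_comb_fvecs[OF V] by (auto simp: PiE_iff)
  have K_ker: "mat_vec R n A \<kappa> i = \<zero>" if "\<kappa> \<in> K" "i < m" for \<kappa> i
    using that mat_vec_lin_comb_eq_zero[OF A V] ker unfolding K_def by (auto simp: PiE_iff)
  have "card K = ?q ^ r"
    unfolding K_def by (simp add: card_image[OF inj_on_lin_comb[OF P]] card_PiE)
  then have "?q ^ (card S + r) \<le> card SV * card K"
    using card_supported_fvecs_ge[OF f S] unfolding SV_def by (simp add: power_add)
  also have "\<dots> = card (?h ` (SV \<times> K))"
    using card_image[OF inj_on_add_kernel[OF A ind S K_fvecs K_ker]]
    unfolding SV_def by (simp add: card_cartesian_product)
  also have "\<dots> \<le> card (fvecs R n)"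
    by (rule card_mono[OF finite_fvecs[OF f]]) (use K_fvecs in \<open>auto simp: SV_def fvecs_def\<close>)
  also have "\<dots> \<le> ?q ^ n" using card_fvecs_le[OF f] .
  finally show ?thesis using card_carrier_ge2[OF f] power_le_imp_le_exp by fastforce
qed

lemma rdist_plus_agreement_le:
  assumes f: "finite (carrier R)" and A: "A \<in> fmats R m n" and B: "B \<in> fmats R m n"
    and P: "pivot_family R n r V p"
    and agree: "\<And>j i. j < r \<Longrightarrow> i < m \<Longrightarrow> mat_vec R n A (V j) i = mat_vec R n B (V j) i"
  shows "rdist R m n A B + r \<le> n"
proof -
  have ker: "mat_vec R n (\<lambda>i j. A i j \<ominus> B i j) (V j) i = \<zero>" if "j < r" "i < m" for j i
    using mat_vec_agree_diff_eq_zero[OF A B] pivot_family_fvecs[OF P] agree that by blast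
  note card_le = card_indep_cols_plus_kernel_le[OF f diff_fmats[OF A B] P ker]
  have "r \<le> n" using card_le[of "{}"] by (simp add: cols_indep_def)
  moreover have "rdist R m n A B \<le> n - r"
    unfolding rdist_def by (rule mrank_le) (simp add: card_le le_diff_conv2 \<open>r \<le> n\<close>)
  ultimately show ?thesis by simp
qed

end

section \<open>MRD codes\<close>

locale MRD_code = field +
  fixes m n :: nat and C :: "(nat \<Rightarrow> nat \<Rightarrow> 'a) set"
  assumes finite_carrier: "finite (carrier R)" and MRD: "is_MRD R m n C"
begin

abbreviation d :: nat where "d \<equiv> min_dist R m n C"

lemma code_subset: "C \<subseteq> fmats R m n"
  using MRD unfolding is_MRD_def by simp

lemma finite_code: "finite C"
  using finite_subset[OF code_subset finite_fmats[OF finite_carrier]] .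

lemma two_le_card_code: "2 \<le> card C"
  using MRD unfolding is_MRD_def by simp

lemma dims_pos: "0 < m" "0 < n"
proof -
  have "C \<subseteq> {\<lambda>i j. \<zero>}" if "m = 0 \<or> n = 0"
    using code_subset that unfolding fmats_def by (auto intro!: ext)
  then have "m = 0 \<or> n = 0 \<Longrightarrow> card C \<le> 1"
    using card_mono[of "{\<lambda>i j. \<zero>}" C] by auto
  then have "\<not> (m = 0 \<or> n = 0)" using two_le_card_code by linarith
  then show "0 < m" "0 < n" by auto
qed

lemma min_dist_le_rdist: "A \<in> C \<Longrightarrow> B \<in> C \<Longrightarrow> A \<noteq> B \<Longrightarrow> d \<le> rdist R m n A B"
proof -
  assume "A \<in> C" "B \<in> C" "A \<noteq> B"
  have "{rdist R m n A B | A B. A \<in> C \<and> B \<in> C \<and> A \<noteq> B} \<subseteq> (\<lambda>(A, B). rdist R m n A B) ` (C \<times> C)"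
    by auto
  then have "finite {rdist R m n A B | A B. A \<in> C \<and> B \<in> C \<and> A \<noteq> B}"
    using finite_code by (meson finite_SigmaI finite_imageI finite_subset)
  then show ?thesis unfolding min_dist_def by (rule Min_le) (use \<open>A \<in> C\<close> \<open>B \<in> C\<close> \<open>A \<noteq> B\<close> in blast)
qed

lemma min_dist_le_n: "d \<le> n"
proof -
  obtain A B where "A \<in> C" "B \<in> C" "A \<noteq> B"
    using two_le_card_code by (metis card_le_Suc0_iff_eq finite_code not_less_eq_eq numeral_2_eq_2)
  then show ?thesis using min_dist_le_rdist rdist_le_n le_trans by blast
qed

lemma rate_eq: "real n * code_rate R m n C = real n - real d + 1"
proof -
  have q: "1 < real (card (carrier R))" using card_carrier_ge2[OF finite_carrier] by simp
  have "card C = card (carrier R) ^ (m * (n - d + 1))" using MRD unfolding is_MRD_def by blast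
  then have "log (real (card (carrier R))) (real (card C)) = real (m * (n - d + 1))"
    using q by (simp only: of_nat_power log_pow_cancel)
  then have "log (real (card (carrier R))) (real (card C)) = real m * real (n - d + 1)"
    by (simp only: of_nat_mult)
  then show ?thesis
    unfolding code_rate_def using dims_pos min_dist_le_n by (simp add: of_nat_diff)
qed

lemma codewords_eq_if_agree:
  assumes A: "A \<in> C" and B: "B \<in> C" and P: "pivot_family R n r V p" and r: "n < r + d"
    and agree: "\<And>j i. j < r \<Longrightarrow> i < m \<Longrightarrow> mat_vec R n A (V j) i = mat_vec R n B (V j) i"
  shows "A = B"
proof (rule ccontr)
  assume "A \<noteq> B"
  then have "d \<le> rdist R m n A B" using min_dist_le_rdist A B by blast
  moreover have "rdist R m n A B + r \<le> n"
    using rdist_plus_agreement_le[OF finite_carrier _ _ P agree] A B code_subset by blast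
  ultimately show False using r by simp
qed

text \<open>Since \<open>|C| = q^(m k)\<close> with \<open>k = n - d + 1\<close>, the injective map sending a codeword to its
  values on \<open>k\<close> independent vectors is onto.\<close>
lemma codeword_interpolation:
  assumes P: "pivot_family R n (n - d + 1) V p" and T: "T \<in> fmats R m (n - d + 1)"
  shows "\<exists>c\<in>C. \<forall>i<m. \<forall>j<n - d + 1. mat_vec R n c (V j) i = T i j"
proof -
  let ?k = "n - d + 1"
  define \<Phi> where "\<Phi> = (\<lambda>c i j. if i < m \<and> j < ?k then mat_vec R n c (V j) i else \<zero>)"
  have sub: "\<Phi> ` C \<subseteq> fmats R m ?k"
    unfolding \<Phi>_def fmats_def using code_subset pivot_family_fvecs[OF P] mat_vec_closed by auto
  have "inj_on \<Phi> C"
  proof (rule inj_onI)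
    fix A B assume "A \<in> C" "B \<in> C" "\<Phi> A = \<Phi> B"
    then show "A = B"
      by (intro codewords_eq_if_agree[OF _ _ P]) (auto simp: \<Phi>_def fun_eq_iff min_dist_le_n, metis)
  qed
  moreover have "card C = card (carrier R) ^ (m * ?k)" using MRD unfolding is_MRD_def by blast
  ultimately have "card (fmats R m ?k) \<le> card (\<Phi> ` C)"
    using card_fmats_le[OF finite_carrier, of m ?k] by (simp add: card_image)
  then have "\<Phi> ` C = fmats R m ?k"
    using card_seteq[OF finite_fmats[OF finite_carrier] sub] by blast
  then obtain c where "c \<in> C" "T = \<Phi> c" using T by auto
  then show ?thesis unfolding \<Phi>_def by auto
qed

end

lemma MRD_codeI: "field F \<Longrightarrow> finite (carrier F) \<Longrightarrow> is_MRD F m n C \<Longrightarrow> MRD_code F m n C"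
  by (simp add: MRD_code_def MRD_code_axioms_def)

section \<open>Graphs of matrices\<close>

definition graph_params :: "('a, 'b) ring_scheme \<Rightarrow> nat \<Rightarrow> nat \<Rightarrow> (nat \<times> nat \<Rightarrow> 'a) set" where
  "graph_params F n k = {..<k} \<times> {..<n - (k + 2)} \<rightarrow>\<^sub>E carrier F"

lemma finite_graph_params: "finite (carrier F) \<Longrightarrow> finite (graph_params F n k)"
  unfolding graph_params_def by (simp add: finite_PiE)

lemma card_graph_params:
  "finite (carrier F) \<Longrightarrow> card (graph_params F n k) = card (carrier F) ^ (k * (n - (k + 2)))"
  unfolding graph_params_def by (simp add: card_PiE card_cartesian_product power_mult)

text \<open>Row \<open>j\<close> of the \<open>k \<times> n\<close> matrix \<open>[0 0 | I | M]\<close>.\<close>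
definition graph_vec :: "('a, 'b) ring_scheme \<Rightarrow> nat \<Rightarrow> nat \<Rightarrow> (nat \<times> nat \<Rightarrow> 'a) \<Rightarrow> nat \<Rightarrow> nat \<Rightarrow> 'a" where
  "graph_vec F n k M j = (\<lambda>s. if s = 2 + j then \<one>\<^bsub>F\<^esub>
     else if k + 2 \<le> s \<and> s < n then M (j, s - (k + 2)) else \<zero>\<^bsub>F\<^esub>)"

definition graph_family :: "('a, 'b) ring_scheme \<Rightarrow> nat \<Rightarrow> nat \<Rightarrow> (nat \<times> nat \<Rightarrow> 'a) \<Rightarrow> nat \<Rightarrow> nat \<Rightarrow> 'a" where
  "graph_family F n k M j =
     (if j < k then graph_vec F n k M j else if j = k then unit_vec F 0 else unit_vec F 1)"

definition graph_pivot :: "nat \<Rightarrow> nat \<Rightarrow> nat" where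
  "graph_pivot k j = (if j < k then 2 + j else if j = k then 0 else 1)"

definition add_cols01 :: "('a, 'b) ring_scheme \<Rightarrow> nat \<Rightarrow> (nat \<Rightarrow> nat \<Rightarrow> 'a) \<Rightarrow> (nat \<Rightarrow> 'a) \<Rightarrow> (nat \<Rightarrow> 'a)
    \<Rightarrow> nat \<Rightarrow> nat \<Rightarrow> 'a" where
  "add_cols01 F m A a b = (\<lambda>i j. if i < m \<and> j = 0 then A i 0 \<oplus>\<^bsub>F\<^esub> a i
     else if i < m \<and> j = 1 then A i 1 \<oplus>\<^bsub>F\<^esub> b i else A i j)"

context field
begin

lemma graph_vec_fvecs: "M \<in> graph_params R n k \<Longrightarrow> j < k \<Longrightarrow> k + 2 \<le> n \<Longrightarrow> graph_vec R n k M j \<in> fvecs R n"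
  unfolding fvecs_def graph_vec_def graph_params_def by (auto simp: PiE_iff)

lemma pivot_family_graph:
  assumes M: "M \<in> graph_params R n k" and n: "k + 2 \<le> n"
  shows "pivot_family R n (k + 2) (graph_family R n k M) (graph_pivot k)"
  unfolding pivot_family_def
proof (intro allI impI conjI)
  fix j j' assume "j < k + 2" "j' < k + 2"
  then show "graph_family R n k M j \<in> fvecs R n" "graph_pivot k j < n"
    "graph_family R n k M j' (graph_pivot k j) = (if j' = j then \<one> else \<zero>)"
    using graph_vec_fvecs[OF M] unit_vec_fvecs[of 0 n] unit_vec_fvecs[of 1 n] n
    by (auto simp: graph_family_def graph_pivot_def graph_vec_def unit_vec_def)
qed

lemma graph_difference_pivot_vec:
  assumes M: "M \<in> graph_params R n k" and M': "M' \<in> graph_params R n k" and "M \<noteq> M'"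
    and n: "k + 2 \<le> n"
  obtains a j0 w q where "a \<in> carrier R" "j0 < k"
    "w = (\<lambda>s. a \<otimes> graph_vec R n k M j0 s \<oplus> \<ominus> a \<otimes> graph_vec R n k M' j0 s)"
    "w \<in> fvecs R n" "q < n" "w q = \<one>" "\<And>j. j < k \<Longrightarrow> w (2 + j) = \<zero>"
proof -
  obtain j0 t0 where j0: "j0 < k" and t0: "t0 < n - (k + 2)" and ne: "M (j0, t0) \<noteq> M' (j0, t0)"
  proof -
    have "\<exists>x\<in>{..<k} \<times> {..<n - (k + 2)}. M x \<noteq> M' x"
      using PiE_ext[of M _ _ M'] M M' \<open>M \<noteq> M'\<close> unfolding graph_params_def by blast
    then show ?thesis using that by auto
  qed
  define \<gamma> where "\<gamma> = M (j0, t0) \<ominus> M' (j0, t0)"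
  have Mc: "M (j0, t0) \<in> carrier R" "M' (j0, t0) \<in> carrier R"
    using M M' j0 t0 by (auto simp: graph_params_def PiE_iff)
  then have "\<gamma> \<noteq> \<zero>" using ne minus_eq_zero_iff unfolding \<gamma>_def by blast
  then have \<gamma>_inv: "inv \<gamma> \<in> carrier R" "inv \<gamma> \<otimes> \<gamma> = \<one>"
    using Mc field_Units unfolding \<gamma>_def by auto
  define w where "w = (\<lambda>s. inv \<gamma> \<otimes> graph_vec R n k M j0 s \<oplus> \<ominus> (inv \<gamma>) \<otimes> graph_vec R n k M' j0 s)"
  have "w \<in> fvecs R n"
    unfolding w_def
    by (rule fvecs_lin) (use graph_vec_fvecs[OF M j0 n] graph_vec_fvecs[OF M' j0 n] \<gamma>_inv in auto)
  moreover have "w (2 + j) = \<zero>" if "j < k" for j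
    using that \<gamma>_inv by (simp add: w_def graph_vec_def l_minus r_neg)
  moreover have "w (k + 2 + t0) = \<one>"
  proof -
    have "w (k + 2 + t0) = inv \<gamma> \<otimes> M (j0, t0) \<oplus> \<ominus> (inv \<gamma>) \<otimes> M' (j0, t0)"
      using t0 j0 by (simp add: w_def graph_vec_def less_diff_conv)
    also have "\<dots> = inv \<gamma> \<otimes> (M (j0, t0) \<ominus> M' (j0, t0))" using Mc \<gamma>_inv by algebra
    finally show ?thesis using \<gamma>_inv unfolding \<gamma>_def by simp
  qed
  moreover have "k + 2 + t0 < n" using t0 by simp
  ultimately show thesis using that[OF \<gamma>_inv(1) j0 w_def] by blast
qed

lemma rdist_le_if_agree_on_graph:
  assumes f: "finite (carrier R)" and A: "A \<in> fmats R m n" and B: "B \<in> fmats R m n"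
    and M: "M \<in> graph_params R n k" and n: "k + 2 \<le> n"
    and agree: "\<And>j i. j < k \<Longrightarrow> i < m \<Longrightarrow>
      mat_vec R n A (graph_vec R n k M j) i = mat_vec R n B (graph_vec R n k M j) i"
    and col0: "\<And>i. i < m \<Longrightarrow> A i 0 = B i 0" and col1: "\<And>i. i < m \<Longrightarrow> A i 1 = B i 1"
  shows "rdist R m n A B + (k + 2) \<le> n"
proof (rule rdist_plus_agreement_le[OF f A B pivot_family_graph[OF M n]])
  fix j i assume "j < k + 2" "i < m"
  then show "mat_vec R n A (graph_family R n k M j) i = mat_vec R n B (graph_family R n k M j) i"
    using agree col0 col1 n by (auto simp: graph_family_def mat_vec_unit_vec[OF A] mat_vec_unit_vec[OF B])
qed

text \<open>Gaussian elimination of the rows of two distinct graphs yields \<open>k + 1\<close> independent vectors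
  in their span.\<close>
lemma rdist_le_if_agree_on_two_graphs:
  assumes f: "finite (carrier R)" and A: "A \<in> fmats R m n" and B: "B \<in> fmats R m n"
    and M: "M \<in> graph_params R n k" and M': "M' \<in> graph_params R n k" and "M \<noteq> M'"
    and n: "k + 2 \<le> n"
    and agree: "\<And>j i. j < k \<Longrightarrow> i < m \<Longrightarrow>
      mat_vec R n A (graph_vec R n k M j) i = mat_vec R n B (graph_vec R n k M j) i"
    and agree': "\<And>j i. j < k \<Longrightarrow> i < m \<Longrightarrow>
      mat_vec R n A (graph_vec R n k M' j) i = mat_vec R n B (graph_vec R n k M' j) i"
  shows "rdist R m n A B + Suc k \<le> n"
proof -
  let ?V = "graph_family R n k M"
  obtain a j0 w q where a: "a \<in> carrier R" and j0: "j0 < k"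
    and w_def: "w = (\<lambda>s. a \<otimes> graph_vec R n k M j0 s \<oplus> \<ominus> a \<otimes> graph_vec R n k M' j0 s)"
    and w: "w \<in> fvecs R n" "q < n" "w q = \<one>" "\<And>j. j < k \<Longrightarrow> w (2 + j) = \<zero>"
    using graph_difference_pivot_vec[OF M M' \<open>M \<noteq> M'\<close> n] by blast
  have P: "pivot_family R n (Suc k) (\<lambda>j. if j < k then (\<lambda>s. \<one> \<otimes> ?V j s \<oplus> \<ominus> ?V j q \<otimes> w s) else w)
      (\<lambda>j. if j < k then graph_pivot k j else q)"
    by (rule pivot_family_extend[OF pivot_family_prefix[OF pivot_family_graph[OF M n]]])
       (use w in \<open>auto simp: graph_pivot_def\<close>)
  have V: "?V j \<in> fvecs R n" if "j < k" for j
    using pivot_family_fvecs[OF pivot_family_graph[OF M n]] that by simp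
  have agree_w: "mat_vec R n A w i = mat_vec R n B w i" if "i < m" for i
    unfolding w_def using that j0 a graph_vec_fvecs[OF M j0 n] graph_vec_fvecs[OF M' j0 n]
    by (intro mat_vec_agree_lin[OF A B] agree agree') auto
  have agree_V: "mat_vec R n A (\<lambda>s. \<one> \<otimes> ?V j s \<oplus> \<ominus> ?V j q \<otimes> w s) i =
      mat_vec R n B (\<lambda>s. \<one> \<otimes> ?V j s \<oplus> \<ominus> ?V j q \<otimes> w s) i" if "j < k" "i < m" for j i
    using that agree[OF that] agree_w[OF that(2)] fvecs_carrier[OF V[OF that(1)]]
    by (intro mat_vec_agree_lin[OF A B V w(1)]) (auto simp: graph_family_def)
  show ?thesis
    by (rule rdist_plus_agreement_le[OF f A B P]) (simp add: agree_V agree_w)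
qed

lemma rdist_le_two_if_cols_agree:
  assumes f: "finite (carrier R)" and A: "A \<in> fmats R m n" and B: "B \<in> fmats R m n"
    and agree: "\<And>i j. 2 \<le> j \<Longrightarrow> A i j = B i j"
  shows "rdist R m n A B \<le> 2"
proof -
  have "pivot_family R n (n - 2) (\<lambda>j. unit_vec R (j + 2)) (\<lambda>j. j + 2)"
    unfolding pivot_family_def by (auto simp: unit_vec_fvecs) (auto simp: unit_vec_def)
  then have "rdist R m n A B + (n - 2) \<le> n"
    by (rule rdist_plus_agreement_le[OF f A B]) (simp add: mat_vec_unit_vec[OF A] mat_vec_unit_vec[OF B] agree)
  then show ?thesis by simp
qed

lemma add_cols01_fmats:
  "A \<in> fmats R m n \<Longrightarrow> a \<in> fvecs R m \<Longrightarrow> b \<in> fvecs R m \<Longrightarrow> 2 \<le> n \<Longrightarrow> add_cols01 R m A a b \<in> fmats R m n"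
  unfolding fmats_def add_cols01_def by (auto simp: fvecs_carrier)

lemma mat_vec_add_cols01:
  assumes A: "A \<in> fmats R m n" and a: "a \<in> fvecs R m" and b: "b \<in> fvecs R m"
    and x: "x \<in> fvecs R n" "x 0 = \<zero>" "x 1 = \<zero>"
  shows "mat_vec R n (add_cols01 R m A a b) x i = mat_vec R n A x i"
  unfolding mat_vec_def
  by (rule finsum_cong') (use A a b x in \<open>auto simp: add_cols01_def fmats_carrier fvecs_carrier\<close>)

end

section \<open>A received word close to many codewords\<close>

lemma pigeonhole_subset:
  assumes f: "f \<in> A \<rightarrow> B" and A: "finite A" and B: "finite B" and lt: "(l - 1) * card B < card A"
  obtains b S where "b \<in> B" "S \<subseteq> A" "card S = l" "\<forall>x\<in>S. f x = b"
proof -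
  have "B \<noteq> {}" using f lt by (auto simp: Pi_def)
  then obtain b where b: "b \<in> B" and fibre: "card A \<le> card (f -` {b} \<inter> A) * card B"
    using pigeonhole_card[OF f A B] by blast
  have "l \<le> card (f -` {b} \<inter> A)"
  proof (rule ccontr)
    assume "\<not> l \<le> card (f -` {b} \<inter> A)"
    then have "card (f -` {b} \<inter> A) * card B \<le> (l - 1) * card B" by (intro mult_le_mono1) linarith
    then show False using fibre lt by linarith
  qed
  then obtain S where "S \<subseteq> f -` {b} \<inter> A" "card S = l" by (meson obtain_subset_with_card_n)
  then show thesis using that b by blast
qed

context MRD_code
begin

lemma graph_codeword_exists:
  assumes c0: "c0 \<in> C" and a: "a \<in> fvecs R m" and M: "M \<in> graph_params R n (n - d)" and d2: "2 \<le> d"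
  shows "\<exists>c\<in>C. (\<forall>j<n - d. \<forall>i<m. mat_vec R n c (graph_vec R n (n - d) M j) i =
                                mat_vec R n c0 (graph_vec R n (n - d) M j) i) \<and>
              (\<forall>i<m. c i 0 = c0 i 0 \<oplus> a i)"
proof -
  let ?k = "n - d"
  have n: "?k + 2 \<le> n" using d2 min_dist_le_n by simp
  have P: "pivot_family R n (n - d + 1) (graph_family R n ?k M) (graph_pivot ?k)"
    using pivot_family_prefix[OF pivot_family_graph[OF M n]] by simp
  have c0f: "c0 \<in> fmats R m n" using c0 code_subset by blast
  define T where "T = (\<lambda>i j. if i < m \<and> j < ?k then mat_vec R n c0 (graph_vec R n ?k M j) i
                            else if i < m \<and> j = ?k then c0 i 0 \<oplus> a i else \<zero>)"
  have "T \<in> fmats R m (n - d + 1)"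
    unfolding fmats_def T_def
    using mat_vec_closed[OF c0f graph_vec_fvecs[OF M _ n]] fmats_carrier[OF c0f] fvecs_carrier[OF a] by auto
  then obtain c where c: "c \<in> C"
    and c_T: "\<And>i j. i < m \<Longrightarrow> j < n - d + 1 \<Longrightarrow> mat_vec R n c (graph_family R n ?k M j) i = T i j"
    using codeword_interpolation[OF P] by blast
  have "mat_vec R n c (graph_vec R n ?k M j) i = mat_vec R n c0 (graph_vec R n ?k M j) i"
    if "j < ?k" "i < m" for j i
    using c_T[of i j] that by (simp add: T_def graph_family_def)
  moreover have "c i 0 = c0 i 0 \<oplus> a i" if "i < m" for i
    using c_T[of i ?k] that mat_vec_unit_vec[of c m n 0] c code_subset dims_pos
    by (auto simp: T_def graph_family_def)
  ultimately show ?thesis using c by blast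
qed

lemma eq_if_agree_on_two_graphs:
  assumes c: "c \<in> C" and c0: "c0 \<in> C" and d2: "2 \<le> d"
    and M: "M \<in> graph_params R n (n - d)" and M': "M' \<in> graph_params R n (n - d)" and "M \<noteq> M'"
    and agree: "\<And>j i. j < n - d \<Longrightarrow> i < m \<Longrightarrow>
      mat_vec R n c (graph_vec R n (n - d) M j) i = mat_vec R n c0 (graph_vec R n (n - d) M j) i"
    and agree': "\<And>j i. j < n - d \<Longrightarrow> i < m \<Longrightarrow>
      mat_vec R n c (graph_vec R n (n - d) M' j) i = mat_vec R n c0 (graph_vec R n (n - d) M' j) i"
  shows "c = c0"
proof (rule ccontr)
  assume "c \<noteq> c0"
  then have "d \<le> rdist R m n c c0" using min_dist_le_rdist c c0 by blast
  moreover have "rdist R m n c c0 + Suc (n - d) \<le> n"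
  proof (rule rdist_le_if_agree_on_two_graphs[OF finite_carrier _ _ M M' \<open>M \<noteq> M'\<close> _ agree agree'])
    show "c \<in> fmats R m n" "c0 \<in> fmats R m n" using c c0 code_subset by auto
    show "n - d + 2 \<le> n" using d2 min_dist_le_n by simp
  qed
  ultimately show False using min_dist_le_n by linarith
qed

lemma graph_codeword_family:
  assumes c0: "c0 \<in> C" and d2: "2 \<le> d"
  obtains cw where "inj_on cw (graph_params R n (n - d))"
    and "\<And>M. M \<in> graph_params R n (n - d) \<Longrightarrow> cw M \<in> C - {c0}"
    and "\<And>M j i. M \<in> graph_params R n (n - d) \<Longrightarrow> j < n - d \<Longrightarrow> i < m \<Longrightarrow>
      mat_vec R n (cw M) (graph_vec R n (n - d) M j) i = mat_vec R n c0 (graph_vec R n (n - d) M j) i"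
    and "\<And>M i. M \<in> graph_params R n (n - d) \<Longrightarrow> i < m \<Longrightarrow> cw M i 0 = c0 i 0 \<oplus> unit_vec R 0 i"
proof -
  let ?P = "graph_params R n (n - d)"
  have "\<forall>M\<in>?P. \<exists>c. c \<in> C \<and>
      (\<forall>j<n - d. \<forall>i<m. mat_vec R n c (graph_vec R n (n - d) M j) i =
                       mat_vec R n c0 (graph_vec R n (n - d) M j) i) \<and>
      (\<forall>i<m. c i 0 = c0 i 0 \<oplus> unit_vec R 0 i)"
    using graph_codeword_exists[OF c0 unit_vec_fvecs[OF dims_pos(1)] _ d2] by blast
  then obtain cw where cw: "\<forall>M\<in>?P. cw M \<in> C \<and>
      (\<forall>j<n - d. \<forall>i<m. mat_vec R n (cw M) (graph_vec R n (n - d) M j) i =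
                       mat_vec R n c0 (graph_vec R n (n - d) M j) i) \<and>
      (\<forall>i<m. cw M i 0 = c0 i 0 \<oplus> unit_vec R 0 i)"
    by (rule bchoice[THEN exE])
  have ne: "cw M \<noteq> c0" if "M \<in> ?P" for M
  proof
    assume "cw M = c0"
    moreover have "cw M 0 0 = c0 0 0 \<oplus> \<one>" using cw that dims_pos by (simp add: unit_vec_def)
    ultimately have "c0 0 0 \<oplus> \<one> = c0 0 0" by simp
    moreover have "c0 0 0 \<in> carrier R" using c0 code_subset fmats_carrier by blast
    ultimately show False by simp
  qed
  have "inj_on cw ?P"
  proof (rule inj_onI, rule ccontr)
    fix M M' assume M: "M \<in> ?P" and M': "M' \<in> ?P" and "cw M = cw M'" "M \<noteq> M'"
    have "cw M = c0"
    proof (rule eq_if_agree_on_two_graphs[OF _ c0 d2 M M' \<open>M \<noteq> M'\<close>])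
      show "cw M \<in> C" using cw M by blast
      show "mat_vec R n (cw M) (graph_vec R n (n - d) M j) i = mat_vec R n c0 (graph_vec R n (n - d) M j) i"
        if "j < n - d" "i < m" for j i
        using cw M that by blast
      show "mat_vec R n (cw M) (graph_vec R n (n - d) M' j) i = mat_vec R n c0 (graph_vec R n (n - d) M' j) i"
        if "j < n - d" "i < m" for j i
        using cw M' that \<open>cw M = cw M'\<close> by auto
    qed
    then show False using ne[OF M] by simp
  qed
  then show thesis using that cw ne by blast
qed

lemma rdist_add_cols01_graph_codeword:
  assumes c0: "c0 \<in> C" and c: "c \<in> C" and a: "a \<in> fvecs R m" and b: "b \<in> fvecs R m"
    and d2: "2 \<le> d" and M: "M \<in> graph_params R n (n - d)"
    and agree: "\<And>j i. j < n - d \<Longrightarrow> i < m \<Longrightarrow>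
      mat_vec R n c (graph_vec R n (n - d) M j) i = mat_vec R n c0 (graph_vec R n (n - d) M j) i"
    and col0: "\<And>i. i < m \<Longrightarrow> c i 0 = c0 i 0 \<oplus> a i"
    and col1: "\<And>i. i < m \<Longrightarrow> c i 1 = c0 i 1 \<oplus> b i"
  shows "rdist R m n (add_cols01 R m c0 a b) c \<le> d - 2"
proof -
  have n: "n - d + 2 \<le> n" using d2 min_dist_le_n by simp
  have cf: "c0 \<in> fmats R m n" "c \<in> fmats R m n" using c0 c code_subset by auto
  have y: "add_cols01 R m c0 a b \<in> fmats R m n" using add_cols01_fmats[OF cf(1) a b] n by simp
  have "rdist R m n (add_cols01 R m c0 a b) c + (n - d + 2) \<le> n"
  proof (rule rdist_le_if_agree_on_graph[OF finite_carrier y cf(2) M n])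
    fix j i assume "j < n - d" "i < m"
    then show "mat_vec R n (add_cols01 R m c0 a b) (graph_vec R n (n - d) M j) i =
               mat_vec R n c (graph_vec R n (n - d) M j) i"
      using mat_vec_add_cols01[OF cf(1) a b graph_vec_fvecs[OF M _ n]] agree
      by (simp add: graph_vec_def)
  qed (use col0 col1 in \<open>simp_all add: add_cols01_def\<close>)
  then show ?thesis by simp
qed

lemma codewords_with_common_column:
  assumes c0: "c0 \<in> C" and d2: "2 \<le> d" and l: "1 \<le> l"
    and big: "(l - 1) * card (carrier R) ^ m < card (carrier R) ^ ((n - d) * (d - 2))"
  obtains b Cs where "b \<in> fvecs R m" "Cs \<subseteq> C - {c0}" "card Cs = l"
    "\<And>c. c \<in> Cs \<Longrightarrow> rdist R m n (add_cols01 R m c0 (unit_vec R 0) b) c \<le> d - 2"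
proof -
  let ?P = "graph_params R n (n - d)"
  obtain cw where inj: "inj_on cw ?P" and cw_C: "\<And>M. M \<in> ?P \<Longrightarrow> cw M \<in> C - {c0}"
    and cw_graph: "\<And>M j i. M \<in> ?P \<Longrightarrow> j < n - d \<Longrightarrow> i < m \<Longrightarrow>
      mat_vec R n (cw M) (graph_vec R n (n - d) M j) i = mat_vec R n c0 (graph_vec R n (n - d) M j) i"
    and cw_col0: "\<And>M i. M \<in> ?P \<Longrightarrow> i < m \<Longrightarrow> cw M i 0 = c0 i 0 \<oplus> unit_vec R 0 i"
    using graph_codeword_family[OF c0 d2] by blast
  have c0f: "c0 \<in> fmats R m n" using c0 code_subset by blast
  have cwf: "\<And>M. M \<in> ?P \<Longrightarrow> cw M \<in> fmats R m n" using cw_C code_subset by blast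
  define col1 where "col1 = (\<lambda>M i. if i < m then cw M i 1 \<ominus> c0 i 1 else \<zero>)"
  have cw_carrier: "\<And>M i j. M \<in> ?P \<Longrightarrow> cw M i j \<in> carrier R" using cwf fmats_carrier by blast
  have col1: "col1 \<in> ?P \<rightarrow> fvecs R m"
    unfolding col1_def fvecs_def using cw_carrier fmats_carrier[OF c0f] by auto
  have "n - (n - d + 2) = d - 2" using d2 min_dist_le_n by simp
  then have "card ?P = card (carrier R) ^ ((n - d) * (d - 2))"
    using card_graph_params[OF finite_carrier, of n "n - d"] by simp
  then have "(l - 1) * card (fvecs R m) < card ?P"
    using big card_fvecs_le[OF finite_carrier, of m] by (metis le_less_trans mult_le_mono2)
  then obtain b Sub where b: "b \<in> fvecs R m" and Sub: "Sub \<subseteq> ?P" "card Sub = l" "\<forall>M\<in>Sub. col1 M = b"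
    using pigeonhole_subset[OF col1 finite_graph_params[OF finite_carrier] finite_fvecs[OF finite_carrier]]
    by blast
  show thesis
  proof (rule that[OF b, of "cw ` Sub"])
    show "cw ` Sub \<subseteq> C - {c0}" "card (cw ` Sub) = l"
      using cw_C card_image[OF inj_on_subset[OF inj Sub(1)]] Sub by auto
    fix c assume "c \<in> cw ` Sub"
    then obtain M where M: "M \<in> ?P" "col1 M = b" and c: "c = cw M" using Sub by blast
    show "rdist R m n (add_cols01 R m c0 (unit_vec R 0) b) c \<le> d - 2"
      unfolding c
    proof (rule rdist_add_cols01_graph_codeword[OF c0 _ unit_vec_fvecs[OF dims_pos(1)] b d2 M(1)])
      show "cw M \<in> C" using cw_C M by blast
      show "cw M i 1 = c0 i 1 \<oplus> b i" if "i < m" for i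
      proof -
        have "b i = cw M i 1 \<ominus> c0 i 1" using that M(2) unfolding col1_def by auto
        moreover have "cw M i 1 = c0 i 1 \<oplus> (cw M i 1 \<ominus> c0 i 1)"
          using fmats_carrier[OF c0f] cw_carrier[OF M(1)] by algebra
        ultimately show ?thesis by simp
      qed
    qed (use cw_graph cw_col0 M in auto)
  qed
qed

lemma bad_received_word:
  assumes d2: "2 \<le> d" and l: "1 \<le> l"
    and big: "(l - 1) * card (carrier R) ^ m < card (carrier R) ^ ((n - d) * (d - 2))"
  shows "\<exists>y\<in>fmats R m n. \<exists>cs. inj_on cs {..l} \<and> cs ` {..l} \<subseteq> C \<and>
           (\<Sum>i\<le>l. rdist R m n y (cs i)) \<le> 2 + l * (d - 2)"
proof -
  obtain c0 where c0: "c0 \<in> C" using two_le_card_code by fastforce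
  obtain b Cs where b: "b \<in> fvecs R m" and Cs: "Cs \<subseteq> C - {c0}" "card Cs = l"
    and close: "\<And>c. c \<in> Cs \<Longrightarrow> rdist R m n (add_cols01 R m c0 (unit_vec R 0) b) c \<le> d - 2"
    using codewords_with_common_column[OF c0 d2 l big] by blast
  define y where "y = add_cols01 R m c0 (unit_vec R 0) b"
  have c0f: "c0 \<in> fmats R m n" using c0 code_subset by blast
  have y: "y \<in> fmats R m n"
    unfolding y_def using add_cols01_fmats[OF c0f unit_vec_fvecs[OF dims_pos(1)] b] d2 min_dist_le_n by simp
  have y_c0: "rdist R m n y c0 \<le> 2"
    by (rule rdist_le_two_if_cols_agree[OF finite_carrier y c0f]) (simp add: y_def add_cols01_def)
  have fin: "finite Cs" using Cs finite_code finite_subset by blast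
  have c0_notin: "c0 \<notin> Cs" using Cs by blast
  obtain g where g: "bij_betw g {..l} (insert c0 Cs)"
  proof -
    have "card (insert c0 Cs) = card {..l}" using fin Cs c0_notin by simp
    then show ?thesis using finite_same_card_bij[of "{..l}" "insert c0 Cs"] fin that by auto
  qed
  have "(\<Sum>i\<le>l. rdist R m n y (g i)) = (\<Sum>c\<in>insert c0 Cs. rdist R m n y c)"
    by (rule sum.reindex_bij_betw[OF g])
  also have "\<dots> = rdist R m n y c0 + (\<Sum>c\<in>Cs. rdist R m n y c)" using fin c0_notin by simp
  also have "\<dots> \<le> 2 + l * (d - 2)"
    using y_c0 sum_bounded_above[of Cs "rdist R m n y" "d - 2"] close Cs(2) unfolding y_def
    by (simp add: add_mono)
  finally have "(\<Sum>i\<le>l. rdist R m n y (g i)) \<le> 2 + l * (d - 2)" .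
  moreover have "inj_on g {..l}" "g ` {..l} \<subseteq> C"
    using g c0 Cs(1) unfolding bij_betw_def by auto
  ultimately show ?thesis using y by blast
qed

end

lemma quadratic_lower_bound:
  fixes a c r m N L :: real
  assumes a: "0 < a" and c: "0 < c" and N: "1 \<le> N" and mN: "N \<le> m"
    and r_low: "c \<le> r" and r_up: "r \<le> 1 - c - L / N"
    and pos: "1 \<le> N * r" and bound: "a * (N * r - 1) * (N - L - N * r + 1) \<le> m"
  shows "min (c * c * a / 2) (c / 2) * N\<^sup>2 \<le> m"
proof (cases "2 \<le> c * N")
  case True
  have "c * N \<le> N * r" using r_low N by (simp add: mult.commute mult_left_mono)
  then have first: "c * N / 2 \<le> N * r - 1" using True by simp
  have "N * r \<le> N * (1 - c - L / N)" using r_up N by (simp add: mult_left_mono)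
  moreover have "N * (1 - c - L / N) = N - c * N - L" using N by (simp add: field_simps)
  ultimately have second: "c * N + 1 \<le> N - L - N * r + 1" by linarith
  have "c * N / 2 * (c * N) \<le> (N * r - 1) * (N - L - N * r + 1)"
    by (rule mult_mono) (use first second c N pos in auto)
  then have "a * (c * N / 2 * (c * N)) \<le> a * ((N * r - 1) * (N - L - N * r + 1))"
    using a by (intro mult_left_mono) auto
  moreover have "a * (c * N / 2 * (c * N)) = c * c * a / 2 * N\<^sup>2" by (simp add: power2_eq_square mult_ac)
  moreover have "a * ((N * r - 1) * (N - L - N * r + 1)) = a * (N * r - 1) * (N - L - N * r + 1)"
    by (simp only: mult.assoc)
  ultimately have "c * c * a / 2 * N\<^sup>2 \<le> m" using bound by linarith
  moreover have "min (c * c * a / 2) (c / 2) * N\<^sup>2 \<le> c * c * a / 2 * N\<^sup>2"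
    by (intro mult_right_mono) auto
  ultimately show ?thesis by linarith
next
  case False
  have "min (c * c * a / 2) (c / 2) * N\<^sup>2 \<le> c / 2 * N\<^sup>2" by (intro mult_right_mono) auto
  also have "\<dots> = N * (c * N / 2)" by (simp add: power2_eq_square)
  also have "\<dots> \<le> N" using False N by (simp add: mult_left_le)
  finally show ?thesis using mN by simp
qed

context MRD_code
begin

lemma avg_list_dec_sum_gt:
  assumes LD: "avg_list_dec R m n C (real l * (1 - code_rate R m n C) / real (l + 1)) l"
    and y: "y \<in> fmats R m n" and cs: "inj_on cs {..l}" "cs ` {..l} \<subseteq> C"
  shows "real l * (real d - 1) < (\<Sum>i\<le>l. real (rdist R m n y (cs i)))"
proof -
  have "(1 - code_rate R m n C) * real n = real d - 1" using rate_eq by (simp add: algebra_simps)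
  then have radius: "real l * (1 - code_rate R m n C) / real (l + 1) * real n =
      real l * (real d - 1) / real (l + 1)"
    by (metis mult.assoc times_divide_eq_left)
  have "real l * (1 - code_rate R m n C) / real (l + 1) * real n <
      (\<Sum>i\<le>l. real (rdist R m n y (cs i))) / real (l + 1)"
    using LD y cs unfolding avg_list_dec_def by blast
  then have "real l * (real d - 1) / real (l + 1) < (\<Sum>i\<le>l. real (rdist R m n y (cs i))) / real (l + 1)"
    unfolding radius .
  then show ?thesis by (simp add: divide_less_cancel)
qed

lemma list_dec_exponent_bound:
  assumes LD: "avg_list_dec R m n C (real l * (1 - code_rate R m n C) / real (l + 1)) l"
    and l: "2 \<le> l" and d2: "2 \<le> d"
  shows "(n - d) * (d - 2) < m + l"
proof (rule ccontr)
  let ?q = "card (carrier R)"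
  have q: "2 \<le> ?q" using card_carrier_ge2[OF finite_carrier] .
  assume not_lt: "\<not> (n - d) * (d - 2) < m + l"
  have "l - 1 < 2 ^ l" using less_exp[of l] by linarith
  then have "(l - 1) * ?q ^ m < 2 ^ l * ?q ^ m" using q by simp
  also have "\<dots> \<le> ?q ^ l * ?q ^ m" using q by (simp add: power_mono)
  also have "\<dots> = ?q ^ (m + l)" by (simp add: power_add)
  also have "\<dots> \<le> ?q ^ ((n - d) * (d - 2))" using not_lt q by (intro power_increasing) auto
  finally have big: "(l - 1) * ?q ^ m < ?q ^ ((n - d) * (d - 2))" .
  have "1 \<le> l" using l by simp
  then obtain y cs where y: "y \<in> fmats R m n" and cs: "inj_on cs {..l}" "cs ` {..l} \<subseteq> C"
    and sum_le: "(\<Sum>i\<le>l. rdist R m n y (cs i)) \<le> 2 + l * (d - 2)"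
    using bad_received_word[OF d2 _ big] by blast
  have "d - 1 = (d - 2) + 1" using d2 by simp
  then have "l * (d - 1) = l * (d - 2) + l" by simp
  then have "(\<Sum>i\<le>l. rdist R m n y (cs i)) \<le> l * (d - 1)" using l sum_le by linarith
  then have "real (\<Sum>i\<le>l. rdist R m n y (cs i)) \<le> real (l * (d - 1))" by (simp only: of_nat_le_iff)
  then have "(\<Sum>i\<le>l. real (rdist R m n y (cs i))) \<le> real l * (real d - 1)"
    using d2 by (simp add: of_nat_diff)
  then show False using avg_list_dec_sum_gt[OF LD y cs] by linarith
qed

lemma list_dec_dimension_bound:
  assumes LD: "avg_list_dec R m n C (real l * (1 - code_rate R m n C) / real (l + 1)) l"
    and l: "2 \<le> l"
  shows "real (n - d) * (real d - real l) \<le> real (l + 1) * real m"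
proof (cases "d \<le> l")
  case True
  then have "real (n - d) * (real d - real l) \<le> 0" by (simp add: mult_nonneg_nonpos)
  moreover have "0 \<le> real (l + 1) * real m" by simp
  ultimately show ?thesis by linarith
next
  case False
  then have exponent: "(n - d) * (d - 2) < m + l" using list_dec_exponent_bound[OF LD l] l by simp
  have "l * 1 \<le> l * m" using dims_pos(1) by (intro mult_le_mono2) simp
  moreover have "(l + 1) * m = l * m + m" by simp
  ultimately have "m + l - 1 \<le> (l + 1) * m" by linarith
  have "real (n - d) * (real d - real l) \<le> real (n - d) * (real d - 2)"
    using l by (intro mult_left_mono) auto
  also have "\<dots> = real ((n - d) * (d - 2))" using False l by (simp add: of_nat_diff)
  also have "\<dots> \<le> real ((l + 1) * m)"
    using exponent \<open>m + l - 1 \<le> (l + 1) * m\<close> by (simp only: of_nat_le_iff)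
  finally show ?thesis by (simp only: of_nat_mult)
qed


lemma list_dec_linear_bound:
  assumes LD: "avg_list_dec R m n C (real l * (1 - code_rate R m n C) / real (l + 1)) l"
    and l: "2 \<le> l"
  shows "1 / real (l + 1) * (real n * code_rate R m n C - 1) *
           (real n - real l - real n * code_rate R m n C + 1) \<le> real m"
proof -
  have e1: "real n * code_rate R m n C - 1 = real (n - d)"
    using rate_eq min_dist_le_n by (simp add: of_nat_diff)
  have e2: "real n - real l - real n * code_rate R m n C + 1 = real d - real l"
    using rate_eq by simp
  show ?thesis
    unfolding e1 e2 using list_dec_dimension_bound[OF LD l] by (simp add: pos_divide_le_eq mult.commute)
qed

lemma list_dec_quadratic_bound:
  assumes LD: "avg_list_dec R m n C (real l * (1 - code_rate R m n C) / real (l + 1)) l"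
    and l: "2 \<le> l" and c: "0 < c" and "n \<le> m"
    and "c \<le> code_rate R m n C" "code_rate R m n C \<le> 1 - c - real l / real n"
  shows "min (c * c * (1 / real (l + 1)) / 2) (c / 2) * real n ^ 2 \<le> real m"
proof (rule quadratic_lower_bound[OF _ c _ _ _ _ _ list_dec_linear_bound[OF LD l]])
  show "1 \<le> real n * code_rate R m n C" using rate_eq min_dist_le_n by simp
qed (use assms dims_pos in auto)

end

theorem theoremA1:
  fixes l :: nat
  assumes "2 \<le> l"
  shows "\<exists>cl > 0.
    (\<forall>(F :: nat ring) m n C. field F \<and> finite (carrier F) \<and> n \<le> m \<and> is_MRD F m n C \<and>
        avg_list_dec F m n C (real l * (1 - code_rate F m n C) / real (l + 1)) l \<longrightarrow>
        real m \<ge> cl * (real n * code_rate F m n C - 1) *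
                   (real n - real l - real n * code_rate F m n C + 1)) \<and>
    (\<forall>c > 0. \<exists>c' > 0. \<forall>(F :: nat ring) m n C. field F \<and> finite (carrier F) \<and> n \<le> m \<and> is_MRD F m n C \<and>
        avg_list_dec F m n C (real l * (1 - code_rate F m n C) / real (l + 1)) l \<and>
        c \<le> code_rate F m n C \<and> code_rate F m n C \<le> 1 - c - real l / real n \<longrightarrow>
        real m \<ge> c' * real n ^ 2)"
  apply (rule exI[of _ "1 / real (l + 1)"], intro conjI allI impI)
  subgoal by simp
  subgoal using MRD_code.list_dec_linear_bound[OF MRD_codeI] assms by blast
  subgoal for c
    apply (rule exI[of _ "min (c * c * (1 / real (l + 1)) / 2) (c / 2)"])
    using MRD_code.list_dec_quadratic_bound[OF MRD_codeI] assms by auto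
  done

end
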